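(* Let $n\geq 6$ and $p\geq 2$. Then $\rho(\mathbf{S}_{p}(B_{3}))<\rho(\mathbf{S}_{p}(B_{2}))$.
   Context: All graphs are simple and connected; $d_i$ is the degree of $v_i$. The $p$-Sombor matrix $\mathbf{S}_{p}(G)$ has $(i,j)$-entry $(d_i^{p}+d_j^{p})^{1/p}$ if $v_iv_j\in E(G)$ and $0$ otherwise; $\rho(\mathbf{S}_{p}(G))$ is its largest eigenvalue. $B_2$ is the graph of order $n$ consisting of two triangles sharing exactly one vertex $c$, with $n-5$ pendant vertices attached to $c$. $B_3$ is the graph of order $n$ obtained from $K_4$ minus an edge (with adjacent degree-3 vertices $u,v$) by attaching $n-5$ pendant vertices to $u$ and one pendant vertex to $v$. *)

theory Defs
  imports "Jordan_Normal_Form.Matrix" "Jordan_Normal_Form.Char_Poly"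
begin

text \<open>Simple graphs on the vertex set {0..<n}, given by a symmetric irreflexive
adjacency predicate. Degree of vertex i: number of neighbours in {0..<n}.\<close>

definition deg :: "nat \<Rightarrow> (nat \<Rightarrow> nat \<Rightarrow> bool) \<Rightarrow> nat \<Rightarrow> nat" where
  "deg n adj i = card {j \<in> {0..<n}. adj i j}"

definition sombor_mat :: "real \<Rightarrow> nat \<Rightarrow> (nat \<Rightarrow> nat \<Rightarrow> bool) \<Rightarrow> real mat" where
  "sombor_mat p n adj = mat n n (\<lambda>(i,j). if adj i j
      then (real (deg n adj i) powr p + real (deg n adj j) powr p) powr (1 / p) else 0)"

definition rho :: "real mat \<Rightarrow> real" where
  "rho A = Max {k. eigenvalue A k}"

definition sym_edge :: "nat \<Rightarrow> nat \<Rightarrow> (nat \<times> nat) set \<Rightarrow> bool" where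
  "sym_edge i j E = ((i, j) \<in> E \<or> (j, i) \<in> E)"

text \<open>B2 on {0..<n}: centre c = 0, triangles {0,1,2} and {0,3,4}, pendant
vertices 5,...,n-1 attached to 0.\<close>
definition B2_adj :: "nat \<Rightarrow> nat \<Rightarrow> nat \<Rightarrow> bool" where
  "B2_adj n i j = (i < n \<and> j < n \<and>
     sym_edge i j ({(0,1),(0,2),(1,2),(0,3),(0,4),(3,4)} \<union> {(0,k) | k. 5 \<le> k \<and> k < n}))"

text \<open>B3 on {0..<n}: K4 minus the edge 2-3 on {0,1,2,3}, with u = 0, v = 1 the
adjacent degree-3 vertices; pendant vertex 4 attached to v = 1 and pendant
vertices 5,...,n-1 (n-5 of them) attached to u = 0.\<close>
definition B3_adj :: "nat \<Rightarrow> nat \<Rightarrow> nat \<Rightarrow> bool" where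
  "B3_adj n i j = (i < n \<and> j < n \<and>
     sym_edge i j ({(0,1),(0,2),(0,3),(1,2),(1,3),(1,4)} \<union> {(0,k) | k. 5 \<le> k \<and> k < n}))"

end

theory Submission
  imports Defs
begin

text \<open>For \<open>B\<^sub>3\<close>, a positive vector \<open>w\<close> with
  \<open>S w \<le> U w\<close> bounds every real eigenvalue by \<open>U\<close> (Collatz--Wielandt). For \<open>B\<^sub>2\<close>, eigenvectors
  that are constant on the orbits (centre, triangle vertices, pendants) reduce the eigenvalue
  equation to a cubic, so any \<open>L\<close> at which the cubic is negative lies below a real eigenvalue.
  The entries \<open>(x\<^sup>p + y\<^sup>p)\<^bsup>1/p\<^esup>\<close> decrease in \<open>p\<close>, lie between \<open>max x y\<close> and the Euclidean
  value for \<open>p \<ge> 2\<close>, and so both bounds can be made uniform in \<open>p\<close> when \<open>n \<ge> 7\<close>: symbolically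
  for \<open>n \<ge> 13\<close> (with \<open>U = K \<surd>(K + 2)\<close>, \<open>K = n - 2\<close>) and numerically for \<open>7 \<le> n \<le> 12\<close>. For
  \<open>n = 6\<close> the spectral gap is only about \<open>0.1\<close> near \<open>p = 2\<close>, so \<open>[2, \<infinity>)\<close> is cut into six
  intervals at whose endpoints the entries are enclosed by rational certificates.\<close>

section \<open>p-norms of pairs\<close>

definition pnorm :: "real \<Rightarrow> real \<Rightarrow> real \<Rightarrow> real" where
  "pnorm p x y = (x powr p + y powr p) powr (1 / p)"

lemma pnorm_commute: "pnorm p x y = pnorm p y x"
  unfolding pnorm_def by (simp add: add.commute)

lemma pnorm_nonneg: "0 \<le> pnorm p x y"
  unfolding pnorm_def by simp

lemma pnorm_pos: "0 < x \<Longrightarrow> 0 < pnorm p x y"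
  unfolding pnorm_def using add_pos_nonneg[of "x powr p" "y powr p"] by simp

lemma powr_powr_inverse:
  fixes p x :: real
  shows "0 < p \<Longrightarrow> 0 \<le> x \<Longrightarrow> (x powr p) powr (1 / p) = x"
  by (simp add: powr_powr powr_one del: powr_one_gt_zero_iff)

lemma pnorm_ge_left:
  assumes "0 < p" "0 \<le> x" shows "x \<le> pnorm p x y"
proof -
  have "x = (x powr p) powr (1 / p)" using assms by (simp add: powr_powr_inverse)
  also have "\<dots> \<le> pnorm p x y"
    unfolding pnorm_def using assms by (intro powr_mono2) auto
  finally show ?thesis .
qed

lemma powr_add_le_powr_add:
  fixes u v r :: real
  assumes "0 \<le> u" "0 \<le> v" "1 \<le> r"
  shows "u powr r + v powr r \<le> (u + v) powr r"
proof (cases "u + v = 0")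
  case True
  then have "u = 0" "v = 0" using assms by auto
  then show ?thesis by simp
next
  case False
  then have s: "0 < u + v" using assms by simp
  have shrink: "t powr r \<le> t" if "0 \<le> t" "t \<le> 1" for t :: real
    using powr_mono'[of 1 r t] that assms(3) by simp
  have "u powr r + v powr r = ((u / (u + v)) powr r + (v / (u + v)) powr r) * (u + v) powr r"
    using s assms by (simp add: powr_divide distrib_right)
  also have "\<dots> \<le> (u / (u + v) + v / (u + v)) * (u + v) powr r"
    using s assms by (intro mult_right_mono add_mono shrink) auto
  also have "\<dots> = (u + v) powr r"
    using s by (simp add: add_divide_distrib[symmetric])
  finally show ?thesis .
qed

lemma pnorm_antimono:
  assumes "0 < P" "P \<le> p" "0 \<le> x" "0 \<le> y"
  shows "pnorm p x y \<le> pnorm P x y"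
proof -
  define r where "r = p / P"
  have r: "1 \<le> r" "P * r = p" unfolding r_def using assms by auto
  have "x powr p + y powr p = (x powr P) powr r + (y powr P) powr r"
    using assms r by (simp add: powr_powr)
  also have "\<dots> \<le> (x powr P + y powr P) powr r"
    using r by (intro powr_add_le_powr_add) auto
  finally have "pnorm p x y \<le> ((x powr P + y powr P) powr r) powr (1 / p)"
    unfolding pnorm_def using assms by (intro powr_mono2) auto
  also have "\<dots> = pnorm P x y"
    unfolding pnorm_def using assms r by (auto simp: powr_powr)
  finally show ?thesis .
qed

lemma pnorm_le_of_sum_squares:
  assumes "2 \<le> p" "0 \<le> x" "0 \<le> y" "0 \<le> V" "x^2 + y^2 \<le> V^2"
  shows "pnorm p x y \<le> V"
proof -
  have "pnorm p x y \<le> pnorm 2 x y" using assms by (intro pnorm_antimono) auto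
  also have "pnorm 2 x y = sqrt (x^2 + y^2)"
    unfolding pnorm_def using assms by (simp add: powr_half_sqrt)
  also have "\<dots> \<le> V" using assms by (simp add: real_le_lsqrt)
  finally show ?thesis .
qed

lemma power_powr_of_nat_divide:
  assumes "0 < z" "0 < d"
  shows "(z powr (real m / real d)) ^ d = z ^ m"
proof -
  have "(z powr (real m / real d)) ^ d = z powr (real d * (real m / real d))"
    using assms by (simp add: powr_power)
  also have "\<dots> = z ^ m" using assms by (simp add: powr_realpow)
  finally show ?thesis .
qed

lemma powr_of_nat_divide_le:
  assumes "0 < z" "0 < d" "0 \<le> T" "z ^ m \<le> T ^ d"
  shows "z powr (real m / real d) \<le> T"
  using assms power_mono_iff[of "z powr (real m / real d)" T d]
  by (simp add: power_powr_of_nat_divide)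

lemma powr_of_nat_divide_ge:
  assumes "0 < z" "0 < d" "0 \<le> T" "T ^ d \<le> z ^ m"
  shows "T \<le> z powr (real m / real d)"
  using assms power_mono_iff[of T "z powr (real m / real d)" d]
  by (simp add: power_powr_of_nat_divide)

lemma powr_add_eq_scaled:
  fixes x y P :: real
  assumes "0 < x" "0 < y"
  shows "x powr P + y powr P = x powr P * (1 + (y / x) powr P)"
  using assms by (simp add: powr_divide distrib_left)

text \<open>The witness \<open>T\<close> encloses \<open>(y / x) powr (m / d)\<close>, so that only integer powers of
  rationals remain to be checked, which the simplifier evaluates.\<close>

lemma pnorm_le_by_certificate:
  fixes m d :: nat
  assumes "real m / real d \<le> p" "0 < m" "0 < d" "0 < x" "0 < y" "0 < V" "0 \<le> T"
    and "(y / x) ^ m \<le> T ^ d" "(1 + T) ^ d \<le> (V / x) ^ m"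
  shows "pnorm p x y \<le> V"
proof -
  define P where "P = real m / real d"
  have P: "0 < P" unfolding P_def using assms by simp
  have "(y / x) powr P \<le> T" unfolding P_def using assms by (intro powr_of_nat_divide_le) auto
  moreover have "1 + T \<le> (V / x) powr P"
    unfolding P_def using assms by (intro powr_of_nat_divide_ge) auto
  ultimately have "x powr P + y powr P \<le> x powr P * (V / x) powr P"
    unfolding powr_add_eq_scaled[OF assms(4,5)] using assms by (intro mult_left_mono) auto
  also have "\<dots> = V powr P" using assms by (simp add: powr_divide)
  finally have "pnorm P x y \<le> (V powr P) powr (1 / P)"
    unfolding pnorm_def using P by (intro powr_mono2) auto
  also have "\<dots> = V" using P assms by (simp add: powr_powr_inverse)
  finally have "pnorm P x y \<le> V" .
  moreover have "pnorm p x y \<le> pnorm P x y"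
    using P assms by (intro pnorm_antimono) (auto simp: P_def)
  ultimately show ?thesis by simp
qed

lemma pnorm_ge_by_certificate:
  fixes m d :: nat
  assumes "0 < p" "p \<le> real m / real d" "0 < m" "0 < d" "0 < x" "0 < y" "0 < V" "0 \<le> T"
    and "T ^ d \<le> (y / x) ^ m" "(V / x) ^ m \<le> (1 + T) ^ d"
  shows "V \<le> pnorm p x y"
proof -
  define P where "P = real m / real d"
  have P: "0 < P" unfolding P_def using assms by simp
  have "T \<le> (y / x) powr P" unfolding P_def using assms by (intro powr_of_nat_divide_ge) auto
  moreover have "(V / x) powr P \<le> 1 + T"
    unfolding P_def using assms by (intro powr_of_nat_divide_le) auto
  ultimately have "x powr P * (V / x) powr P \<le> x powr P + y powr P"
    unfolding powr_add_eq_scaled[OF assms(5,6)] using assms by (intro mult_left_mono) auto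
  moreover have "x powr P * (V / x) powr P = V powr P" using assms by (simp add: powr_divide)
  ultimately have "(V powr P) powr (1 / P) \<le> pnorm P x y"
    unfolding pnorm_def using P assms by (intro powr_mono2) auto
  then have "V \<le> pnorm P x y" using P assms by (simp add: powr_powr_inverse)
  also have "\<dots> \<le> pnorm p x y" using assms by (intro pnorm_antimono) (auto simp: P_def)
  finally show ?thesis .
qed

section \<open>Real eigenvalues of nonnegative matrices\<close>

lemma finite_eigenvalues:
  fixes A :: "'a :: field mat"
  assumes "A \<in> carrier_mat n n"
  shows "finite {k. eigenvalue A k}"
proof -
  have "char_poly A \<noteq> 0" using degree_monic_char_poly[OF assms] by auto
  then have "finite {k. poly (char_poly A) k = 0}" by (rule poly_roots_finite)
  then show ?thesis using eigenvalue_root_char_poly[OF assms] by simp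
qed

lemma eigenvalue_le_rho:
  assumes "A \<in> carrier_mat n n" "eigenvalue A k"
  shows "k \<le> rho A"
  unfolding rho_def using finite_eigenvalues[OF assms(1)] assms(2) by (auto intro: Max_ge)

lemma rho_le:
  assumes "A \<in> carrier_mat n n" "eigenvalue A k" "\<And>k. eigenvalue A k \<Longrightarrow> k \<le> U"
  shows "rho A \<le> U"
  unfolding rho_def using finite_eigenvalues[OF assms(1)] assms(2,3) by (subst Max_le_iff) auto

lemma index_mult_mat_vec_sum:
  assumes "A \<in> carrier_mat n n" "dim_vec v = n" "i < n"
  shows "(A *\<^sub>v v) $ i = (\<Sum>j<n. A $$ (i, j) * v $ j)"
  using assms by (auto simp: mult_mat_vec_def scalar_prod_def lessThan_atLeast0 intro!: sum.cong)

lemma eigenvalueI_rows: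
  fixes A :: "real mat"
  assumes A: "A \<in> carrier_mat n n" and "k < n" "v k \<noteq> 0"
    and rows: "\<And>i. i < n \<Longrightarrow> (\<Sum>j<n. A $$ (i, j) * v j) = l * v i"
  shows "eigenvalue A l"
proof -
  have "A *\<^sub>v vec n v = l \<cdot>\<^sub>v vec n v"
    using A rows by (intro eq_vecI) (auto simp: index_mult_mat_vec_sum simp del: index_mult_mat_vec)
  moreover have "vec n v \<noteq> 0\<^sub>v n"
    using assms(2,3) by (metis index_vec index_zero_vec(1))
  ultimately show ?thesis
    unfolding eigenvalue_def eigenvector_def using A by (auto intro!: exI[of _ "vec n v"])
qed

text \<open>Collatz--Wielandt: read the eigen-equation at a coordinate where \<open>\<bar>v\<bar> / w\<close> is maximal.\<close>

lemma eigenvalue_le_of_subinvariant: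
  fixes A :: "real mat"
  assumes A: "A \<in> carrier_mat n n"
    and nonneg: "\<And>i j. i < n \<Longrightarrow> j < n \<Longrightarrow> 0 \<le> A $$ (i, j)"
    and wpos: "\<And>i. i < n \<Longrightarrow> 0 < w i"
    and rows: "\<And>i. i < n \<Longrightarrow> (\<Sum>j<n. A $$ (i, j) * w j) \<le> U * w i"
    and "eigenvalue A k"
  shows "k \<le> U"
proof -
  obtain v where v: "v \<in> carrier_vec n" "v \<noteq> 0\<^sub>v n" "A *\<^sub>v v = k \<cdot>\<^sub>v v"
    using \<open>eigenvalue A k\<close> A unfolding eigenvalue_def eigenvector_def by auto
  define ratio where "ratio i = \<bar>v $ i\<bar> / w i" for i
  obtain i1 where i1: "i1 < n" "v $ i1 \<noteq> 0"
    using v(1,2) by (metis carrier_vecD eq_vecI index_zero_vec)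
  obtain i0 where i0: "i0 < n" "\<And>j. j < n \<Longrightarrow> ratio j \<le> ratio i0"
    using Max_in[of "ratio ` {..<n}"] Max_ge[of "ratio ` {..<n}"] i1(1)
    by (metis (no_types, lifting) empty_iff finite_imageI finite_lessThan imageE image_eqI
        lessThan_iff)
  define M where "M = ratio i0"
  have bound: "\<bar>v $ j\<bar> \<le> M * w j" if "j < n" for j
    using i0(2)[OF that] wpos[OF that] unfolding M_def ratio_def by (simp add: divide_le_eq)
  have "0 < ratio i1" unfolding ratio_def using i1 wpos by simp
  then have M: "0 < M" unfolding M_def using i0(2)[OF i1(1)] by simp
  have vi0: "\<bar>v $ i0\<bar> = M * w i0" unfolding M_def ratio_def using wpos[OF i0(1)] by simp
  have "\<bar>k\<bar> * \<bar>v $ i0\<bar> = \<bar>\<Sum>j<n. A $$ (i0, j) * v $ j\<bar>"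
    using arg_cong[OF v(3), of "\<lambda>u. u $ i0"] A v(1) i0(1)
    by (simp add: index_mult_mat_vec_sum abs_mult del: index_mult_mat_vec)
  also have "\<dots> \<le> (\<Sum>j<n. A $$ (i0, j) * (M * w j))"
    using nonneg i0(1) bound
    by (intro order_trans[OF sum_abs] sum_mono) (simp add: abs_mult mult_left_mono)
  also have "\<dots> = M * (\<Sum>j<n. A $$ (i0, j) * w j)"
    by (simp add: sum_distrib_left algebra_simps)
  also have "\<dots> \<le> U * \<bar>v $ i0\<bar>" using rows[OF i0(1)] M vi0 by simp
  finally have "\<bar>k\<bar> * \<bar>v $ i0\<bar> \<le> U * \<bar>v $ i0\<bar>" .
  moreover have "0 < \<bar>v $ i0\<bar>" using vi0 M wpos[OF i0(1)] by simp
  ultimately show ?thesis by simp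
qed

section \<open>The Sombor matrices of B2 and B3\<close>

lemma sombor_mat_carrier: "sombor_mat p n adj \<in> carrier_mat n n"
  unfolding sombor_mat_def by simp

lemma sombor_mat_index:
  "i < n \<Longrightarrow> j < n \<Longrightarrow> sombor_mat p n adj $$ (i, j) =
     (if adj i j then pnorm p (real (deg n adj i)) (real (deg n adj j)) else 0)"
  unfolding sombor_mat_def pnorm_def by simp

lemma sombor_mat_nonneg: "i < n \<Longrightarrow> j < n \<Longrightarrow> 0 \<le> sombor_mat p n adj $$ (i, j)"
  by (simp add: sombor_mat_index pnorm_nonneg)

lemma sum_lessThan_split_5:
  fixes f :: "nat \<Rightarrow> 'a :: comm_monoid_add"
  assumes "5 \<le> n"
  shows "(\<Sum>j<n. f j) = f 0 + f 1 + f 2 + f 3 + f 4 + (\<Sum>j = 5..<n. f j)"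
proof -
  have "{..<n} = {..<5} \<union> {5..<n}" using assms by auto
  then have "(\<Sum>j<n. f j) = (\<Sum>j<5. f j) + (\<Sum>j = 5..<n. f j)"
    by (simp add: sum.union_disjoint ivl_disj_int)
  then show ?thesis by (simp add: numeral_eq_Suc add.assoc)
qed

lemma B2_adj_iff:
  "5 \<le> n \<Longrightarrow> B2_adj n i j \<longleftrightarrow> i < n \<and> j < n \<and>
     ((i = 0 \<and> j \<noteq> 0) \<or> (j = 0 \<and> i \<noteq> 0) \<or>
      (i = 1 \<and> j = 2) \<or> (i = 2 \<and> j = 1) \<or> (i = 3 \<and> j = 4) \<or> (i = 4 \<and> j = 3))"
  unfolding B2_adj_def sym_edge_def by simp presburger

lemma B3_adj_iff:
  "5 \<le> n \<Longrightarrow> B3_adj n i j \<longleftrightarrow> i < n \<and> j < n \<and>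
     ((i = 0 \<and> j \<noteq> 0 \<and> j \<noteq> 4) \<or> (j = 0 \<and> i \<noteq> 0 \<and> i \<noteq> 4) \<or>
      (i = 1 \<and> (j = 2 \<or> j = 3 \<or> j = 4)) \<or> (j = 1 \<and> (i = 2 \<or> i = 3 \<or> i = 4)))"
  unfolding B3_adj_def sym_edge_def by simp presburger

lemma deg_B2:
  assumes "5 \<le> n" "i < n"
  shows "deg n (B2_adj n) i = (if i = 0 then n - 1 else if i \<le> 4 then 2 else 1)"
proof -
  consider "i = 0" | "i = 1" | "i = 2" | "i = 3" | "i = 4" | "5 \<le> i" by linarith
  then show ?thesis
  proof cases
    case 1
    then have "{j \<in> {0..<n}. B2_adj n i j} = {1..<n}" using assms by (auto simp: B2_adj_iff)
    then show ?thesis using 1 by (simp add: deg_def)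
  next
    case 2
    then have "{j \<in> {0..<n}. B2_adj n i j} = {0, 2}" using assms by (auto simp: B2_adj_iff)
    then show ?thesis using 2 by (simp add: deg_def)
  next
    case 3
    then have "{j \<in> {0..<n}. B2_adj n i j} = {0, 1}" using assms by (auto simp: B2_adj_iff)
    then show ?thesis using 3 by (simp add: deg_def)
  next
    case 4
    then have "{j \<in> {0..<n}. B2_adj n i j} = {0, 4}" using assms by (auto simp: B2_adj_iff)
    then show ?thesis using 4 by (simp add: deg_def)
  next
    case 5
    then have "{j \<in> {0..<n}. B2_adj n i j} = {0, 3}" using assms by (auto simp: B2_adj_iff)
    then show ?thesis using 5 by (simp add: deg_def)
  next
    case 6
    then have "{j \<in> {0..<n}. B2_adj n i j} = {0}" using assms by (auto simp: B2_adj_iff)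
    then show ?thesis using 6 by (simp add: deg_def)
  qed
qed

lemma deg_B3:
  assumes "5 \<le> n" "i < n"
  shows "deg n (B3_adj n) i =
    (if i = 0 then n - 2 else if i = 1 then 4 else if i \<le> 3 then 2 else 1)"
proof -
  consider "i = 0" | "i = 1" | "i = 2 \<or> i = 3" | "i = 4" | "5 \<le> i" by linarith
  then show ?thesis
  proof cases
    case 1
    then have "{j \<in> {0..<n}. B3_adj n i j} = {1..<n} - {4}" using assms by (auto simp: B3_adj_iff)
    then show ?thesis using 1 assms by (simp add: deg_def)
  next
    case 2
    then have "{j \<in> {0..<n}. B3_adj n i j} = {0, 2, 3, 4}" using assms by (auto simp: B3_adj_iff)
    then show ?thesis using 2 by (simp add: deg_def)
  next
    case 3
    then have "{j \<in> {0..<n}. B3_adj n i j} = {0, 1}" using assms by (auto simp: B3_adj_iff)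
    then have "deg n (B3_adj n) i = 2" by (simp add: deg_def)
    then show ?thesis using 3 by auto
  next
    case 4
    then have "{j \<in> {0..<n}. B3_adj n i j} = {1}" using assms by (auto simp: B3_adj_iff)
    then show ?thesis using 4 by (simp add: deg_def)
  next
    case 5
    then have "{j \<in> {0..<n}. B3_adj n i j} = {0}" using assms by (auto simp: B3_adj_iff)
    then show ?thesis using 5 by (simp add: deg_def)
  qed
qed

lemma sombor_mat_B2_index:
  fixes p :: real
  assumes n: "5 \<le> n" and "i < n" "j < n"
  shows "sombor_mat p n (B2_adj n) $$ (i, j) =
    (if B2_adj n i j then if i = 0 \<or> j = 0 then if i \<le> 4 \<and> j \<le> 4
       then pnorm p (real (n - 1)) 2 else pnorm p (real (n - 1)) 1 else pnorm p 2 2 else 0)"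
proof (cases "B2_adj n i j")
  case True
  then have "pnorm p (real (deg n (B2_adj n) i)) (real (deg n (B2_adj n) j)) =
      (if i = 0 \<or> j = 0 then if i \<le> 4 \<and> j \<le> 4
       then pnorm p (real (n - 1)) 2 else pnorm p (real (n - 1)) 1 else pnorm p 2 2)"
    using assms deg_B2[OF n \<open>i < n\<close>] deg_B2[OF n \<open>j < n\<close>] unfolding B2_adj_iff[OF n]
    by (auto intro: pnorm_commute)
  then show ?thesis using assms True by (simp add: sombor_mat_index)
qed (use assms in \<open>simp add: sombor_mat_index\<close>)

lemma B2_row_sum:
  fixes p :: real and w :: "nat \<Rightarrow> real"
  assumes n: "5 \<le> n" and i: "i < n"
  defines "a \<equiv> pnorm p (real (n - 1)) 2" and "b \<equiv> pnorm p (real (n - 1)) 1" and "c \<equiv> pnorm p 2 2"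
  shows "(\<Sum>j<n. sombor_mat p n (B2_adj n) $$ (i, j) * w j) =
    (if i = 0 then a * (w 1 + w 2 + w 3 + w 4) + b * (\<Sum>j = 5..<n. w j)
     else if i = 1 then a * w 0 + c * w 2 else if i = 2 then a * w 0 + c * w 1
     else if i = 3 then a * w 0 + c * w 4 else if i = 4 then a * w 0 + c * w 3 else b * w 0)"
proof -
  have tail: "(\<Sum>j = 5..<n. sombor_mat p n (B2_adj n) $$ (i, j) * w j) =
      (if i = 0 then b * (\<Sum>j = 5..<n. w j) else 0)"
    using i n
    by (auto simp: sombor_mat_B2_index b_def B2_adj_iff sum_distrib_left intro!: sum.cong sum.neutral)
  consider "i = 0" | "i = 1" | "i = 2" | "i = 3" | "i = 4" | "5 \<le> i" by linarith
  then show ?thesis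
    unfolding sum_lessThan_split_5[OF n] tail using i n
    by cases (simp_all add: sombor_mat_B2_index a_def b_def c_def B2_adj_iff distrib_left)
qed

lemma sombor_mat_B3_index:
  fixes p :: real
  assumes n: "5 \<le> n" and "i < n" "j < n"
  shows "sombor_mat p n (B3_adj n) $$ (i, j) =
    (if B3_adj n i j then
       if i = 0 \<or> j = 0 then
         if i = 1 \<or> j = 1 then pnorm p (real (n - 2)) 4
         else if i \<le> 3 \<and> j \<le> 3 then pnorm p (real (n - 2)) 2 else pnorm p (real (n - 2)) 1
       else if i = 4 \<or> j = 4 then pnorm p 4 1 else pnorm p 4 2
     else 0)"
proof (cases "B3_adj n i j")
  case True
  then have "pnorm p (real (deg n (B3_adj n) i)) (real (deg n (B3_adj n) j)) =
      (if i = 0 \<or> j = 0 then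
         if i = 1 \<or> j = 1 then pnorm p (real (n - 2)) 4
         else if i \<le> 3 \<and> j \<le> 3 then pnorm p (real (n - 2)) 2 else pnorm p (real (n - 2)) 1
       else if i = 4 \<or> j = 4 then pnorm p 4 1 else pnorm p 4 2)"
    using assms deg_B3[OF n \<open>i < n\<close>] deg_B3[OF n \<open>j < n\<close>] unfolding B3_adj_iff[OF n]
    by (auto intro: pnorm_commute)
  then show ?thesis using assms True by (simp add: sombor_mat_index)
qed (use assms in \<open>simp add: sombor_mat_index\<close>)

lemma B3_row_sum:
  fixes p :: real and w :: "nat \<Rightarrow> real"
  assumes n: "5 \<le> n" and i: "i < n"
  defines "e \<equiv> pnorm p (real (n - 2)) 4" and "g \<equiv> pnorm p (real (n - 2)) 2"
    and "h \<equiv> pnorm p (real (n - 2)) 1" and "q \<equiv> pnorm p 4 2" and "r \<equiv> pnorm p 4 1"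
  shows "(\<Sum>j<n. sombor_mat p n (B3_adj n) $$ (i, j) * w j) =
    (if i = 0 then e * w 1 + g * (w 2 + w 3) + h * (\<Sum>j = 5..<n. w j)
     else if i = 1 then e * w 0 + q * (w 2 + w 3) + r * w 4
     else if i \<le> 3 then g * w 0 + q * w 1 else if i = 4 then r * w 1 else h * w 0)"
proof -
  have tail: "(\<Sum>j = 5..<n. sombor_mat p n (B3_adj n) $$ (i, j) * w j) =
      (if i = 0 then h * (\<Sum>j = 5..<n. w j) else 0)"
    using i n
    by (auto simp: sombor_mat_B3_index h_def B3_adj_iff sum_distrib_left intro!: sum.cong sum.neutral)
  consider "i = 0" | "i = 1" | "i = 2" | "i = 3" | "i = 4" | "5 \<le> i" by linarith
  then show ?thesis
    unfolding sum_lessThan_split_5[OF n] tail using i n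
    by cases
      (simp_all add: sombor_mat_B3_index e_def g_def h_def q_def r_def B3_adj_iff distrib_left)
qed

section \<open>Comparing the spectral radii\<close>

text \<open>With \<open>x\<^sub>0 = 1\<close>, \<open>x\<^sub>i = a / (\<lambda> - c)\<close> on the triangle vertices \<open>1..4\<close> and
  \<open>x\<^sub>i = b / \<lambda>\<close> on the pendants, all rows of \<open>S x = \<lambda> x\<close> but row 0 hold identically,
  and row 0 is \<open>B2_cubic p n \<lambda> = 0\<close> (here \<open>a, b, c\<close> are the entries on hub--triangle,
  hub--pendant and triangle-base edges).\<close>

definition B2_cubic :: "real \<Rightarrow> nat \<Rightarrow> real \<Rightarrow> real" where
  "B2_cubic p n x = x^2 * (x - pnorm p 2 2) - 4 * (pnorm p (real (n - 1)) 2)^2 * x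
     - real (n - 5) * (pnorm p (real (n - 1)) 1)^2 * (x - pnorm p 2 2)"

lemma B2_eigenvalue_of_cubic_root:
  assumes n: "5 \<le> n" and x: "pnorm p 2 2 < x" and root: "B2_cubic p n x = 0"
  shows "eigenvalue (sombor_mat p n (B2_adj n)) x"
proof -
  define a b c where "a = pnorm p (real (n - 1)) 2" and "b = pnorm p (real (n - 1)) 1"
    and "c = pnorm p 2 2"
  have xc: "0 < x - c" and x0: "0 < x" using x pnorm_nonneg[of p 2 2] unfolding c_def by auto
  define v :: "nat \<Rightarrow> real"
    where "v i = (if i = 0 then 1 else if i \<le> 4 then a / (x - c) else b / x)" for i
  have pendants: "(\<Sum>j = 5..<n. v j) = real (n - 5) * (b / x)"
    by (simp add: v_def)
  have rows: "(\<Sum>j<n. sombor_mat p n (B2_adj n) $$ (i, j) * v j) = x * v i" if "i < n" for i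
  proof -
    have "4 * a^2 * x + real (n - 5) * b^2 * (x - c) = x^2 * (x - c)"
      using root unfolding B2_cubic_def a_def b_def c_def by simp
    then have "a * (4 * (a / (x - c))) + b * (real (n - 5) * (b / x)) = x"
      using xc x0 by (simp add: field_simps power2_eq_square)
    moreover have "a + c * (a / (x - c)) = x * (a / (x - c))"
      using xc by (simp add: field_simps)
    ultimately show ?thesis
      using that x0 unfolding B2_row_sum[OF n that] pendants
      by (simp add: v_def a_def b_def c_def)
  qed
  have "v 0 \<noteq> 0" by (simp add: v_def)
  then show ?thesis
    using n rows by (intro eigenvalueI_rows[OF sombor_mat_carrier, where k = 0]) auto
qed

lemma rho_B2_gt_of_cubic_neg:
  assumes n: "5 \<le> n" and L: "pnorm p 2 2 < L" and neg: "B2_cubic p n L < 0"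
  shows "L < rho (sombor_mat p n (B2_adj n))"
proof -
  define b c K where "b = pnorm p (real (n - 1)) 1" and "c = pnorm p 2 2"
    and "K = 4 * (pnorm p (real (n - 1)) 2)^2 + real (n - 5) * b^2"
  have c: "0 \<le> c" unfolding c_def by (rule pnorm_nonneg)
  have K: "0 \<le> K" unfolding K_def by simp
  define X where "X = L + K + 1"
  have X: "1 \<le> X" "K + 1 \<le> X - c" "L \<le> X" using L K c unfolding X_def c_def by auto
  have "X * (K + 1) \<le> X * (X - c)" using X by (intro mult_left_mono) auto
  moreover have "0 \<le> (X - 1) * (X * (X - c))" using X K by (intro mult_nonneg_nonneg) auto
  moreover have "(X - 1) * (X * (X - c)) = X^2 * (X - c) - X * (X - c)"
    by (simp add: power2_eq_square algebra_simps)
  moreover have "B2_cubic p n X = X^2 * (X - c) - X * (K + 1) + X + real (n - 5) * b^2 * c"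
    unfolding B2_cubic_def K_def b_def c_def by (simp add: algebra_simps)
  moreover have "0 \<le> real (n - 5) * b^2 * c" using c by simp
  ultimately have "0 < B2_cubic p n X" using X by linarith
  moreover have "continuous_on {L..X} (B2_cubic p n)"
    unfolding B2_cubic_def[abs_def] by (intro continuous_intros)
  ultimately obtain x where x: "L \<le> x" "B2_cubic p n x = 0"
    using IVT'[of "B2_cubic p n" L 0 X] neg X by auto
  with neg have "L < x" by (cases "x = L") auto
  moreover have "x \<le> rho (sombor_mat p n (B2_adj n))"
    using L x \<open>L < x\<close>
    by (intro eigenvalue_le_rho[OF sombor_mat_carrier] B2_eigenvalue_of_cubic_root n) auto
  ultimately show ?thesis by simp
qed

text \<open>Divided by \<open>L - c\<close>, the cubic at \<open>L\<close> is decreasing in the entries, so lower bounds on them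
  suffice.\<close>

lemma rho_B2_gt:
  assumes n: "5 \<le> n"
    and A: "0 \<le> A" "A \<le> pnorm p (real (n - 1)) 2" and B: "0 \<le> B" "B \<le> pnorm p (real (n - 1)) 1"
    and C: "C \<le> pnorm p 2 2" and L: "pnorm p 2 2 < L"
    and ineq: "L^2 * (L - C) < 4 * A^2 * L + real (n - 5) * B^2 * (L - C)"
  shows "L < rho (sombor_mat p n (B2_adj n))"
proof -
  define a b c where "a = pnorm p (real (n - 1)) 2" and "b = pnorm p (real (n - 1)) 1"
    and "c = pnorm p 2 2"
  have Lc: "0 < L - c" "L - c \<le> L - C" and L0: "0 < L"
    using C L pnorm_nonneg[of p 2 2] unfolding c_def by auto
  have "L^2 < 4 * A^2 * L / (L - C) + real (n - 5) * B^2"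
    using ineq Lc by (simp add: field_simps)
  also have "\<dots> \<le> 4 * a^2 * L / (L - c) + real (n - 5) * b^2"
    using A B L0 Lc unfolding a_def b_def
    by (intro add_mono frac_le mult_right_mono mult_left_mono power_mono) auto
  finally have "L^2 * (L - c) < 4 * a^2 * L + real (n - 5) * b^2 * (L - c)"
    using Lc by (simp add: field_simps)
  then have "B2_cubic p n L < 0" unfolding B2_cubic_def a_def b_def c_def by simp
  then show ?thesis by (rule rho_B2_gt_of_cubic_neg[OF n L])
qed

text \<open>This eigenvalue (eigenvector \<open>e\<^sub>2 - e\<^sub>3\<close>) only serves to make \<open>rho\<close>, a maximum over the
  real eigenvalues, a maximum over a nonempty set.\<close>

lemma B3_eigenvalue_0:
  assumes n: "5 \<le> n"
  shows "eigenvalue (sombor_mat p n (B3_adj n)) 0"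
proof -
  define v :: "nat \<Rightarrow> real" where "v i = (if i = 2 then 1 else if i = 3 then -1 else 0)" for i
  have pendants: "(\<Sum>j = 5..<n. v j) = 0" by (simp add: v_def)
  have rows: "(\<Sum>j<n. sombor_mat p n (B3_adj n) $$ (i, j) * v j) = 0 * v i" if "i < n" for i
    unfolding B3_row_sum[OF n that] pendants by (simp add: v_def)
  have "v 2 \<noteq> 0" by (simp add: v_def)
  then show ?thesis
    using n rows by (intro eigenvalueI_rows[OF sombor_mat_carrier, where k = 2]) auto
qed

lemma rho_B3_le:
  assumes n: "5 \<le> n"
    and E: "pnorm p (real (n - 2)) 4 \<le> E" and G: "pnorm p (real (n - 2)) 2 \<le> G"
    and H: "pnorm p (real (n - 2)) 1 \<le> H" and Q: "pnorm p 4 2 \<le> Q" and R: "pnorm p 4 1 \<le> R"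
    and U: "0 < U" and \<beta>: "0 < \<beta>"
    and row0: "E * \<beta> * U + 2 * G * (G + Q * \<beta>) + real (n - 5) * H^2 \<le> U^2"
    and row1: "E * U + 2 * Q * (G + Q * \<beta>) + R^2 * \<beta> \<le> U^2 * \<beta>"
  shows "rho (sombor_mat p n (B3_adj n)) \<le> U"
proof -
  txt \<open>Coordinates \<open>2, \<dots>, n - 1\<close> of the test vector are chosen so that their rows of
    \<open>S w \<le> U w\<close> follow from the entry bounds alone; rows 0 and 1 are \<open>row0\<close> and \<open>row1\<close>.\<close>
  define \<gamma> \<delta> \<zeta> where "\<gamma> = (G + Q * \<beta>) / U" and "\<delta> = R * \<beta> / U" and "\<zeta> = H / U"
  define w :: "nat \<Rightarrow> real" where
    "w i = (if i = 0 then 1 else if i = 1 then \<beta> else if i \<le> 3 then \<gamma> else if i = 4 then \<delta> else \<zeta>)"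
    for i
  have "0 < pnorm p (real (n - 2)) 2" "0 < pnorm p (real (n - 2)) 1" "0 < pnorm p 4 1"
    using n by (auto intro: pnorm_pos)
  then have "0 < G" "0 < H" "0 < R" "0 \<le> Q" using G H R Q pnorm_nonneg[of p 4 2] by linarith+
  then have wpos: "0 < w i" for i
    using U \<beta> by (simp add: w_def \<gamma>_def \<delta>_def \<zeta>_def add_pos_nonneg)
  have pendants: "(\<Sum>j = 5..<n. w j) = real (n - 5) * \<zeta>" by (simp add: w_def)
  have "(\<Sum>j<n. sombor_mat p n (B3_adj n) $$ (i, j) * w j) \<le>
      (if i = 0 then E * \<beta> + G * (2 * \<gamma>) + H * (real (n - 5) * \<zeta>)
       else if i = 1 then E + Q * (2 * \<gamma>) + R * \<delta>
       else if i \<le> 3 then G + Q * \<beta> else if i = 4 then R * \<beta> else H)" if "i < n" for i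
    unfolding B3_row_sum[OF n that] pendants
    using E G H Q R wpos[of 1] wpos[of 2] wpos[of 4] wpos[of 5]
    by (auto simp: w_def intro!: add_mono mult_right_mono)
  also have "\<dots> i \<le> U * w i" for i
    using row0 row1 U
    by (auto simp: w_def \<gamma>_def \<delta>_def \<zeta>_def field_simps power2_eq_square)
  finally have rows: "(\<Sum>j<n. sombor_mat p n (B3_adj n) $$ (i, j) * w j) \<le> U * w i"
    if "i < n" for i
    using that .
  have "k \<le> U" if "eigenvalue (sombor_mat p n (B3_adj n)) k" for k
    by (rule eigenvalue_le_of_subinvariant[OF sombor_mat_carrier _ _ rows that])
      (auto intro: sombor_mat_nonneg wpos)
  then show ?thesis by (rule rho_le[OF sombor_mat_carrier B3_eigenvalue_0[OF n]])
qed

lemma rho_B3_lt_rho_B2: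
  assumes n: "5 \<le> n"
    and E: "pnorm p (real (n - 2)) 4 \<le> E" and G: "pnorm p (real (n - 2)) 2 \<le> G"
    and H: "pnorm p (real (n - 2)) 1 \<le> H" and Q: "pnorm p 4 2 \<le> Q" and R: "pnorm p 4 1 \<le> R"
    and U: "0 < U" and \<beta>: "0 < \<beta>"
    and row0: "E * \<beta> * U + 2 * G * (G + Q * \<beta>) + real (n - 5) * H^2 \<le> U^2"
    and row1: "E * U + 2 * Q * (G + Q * \<beta>) + R^2 * \<beta> \<le> U^2 * \<beta>"
    and A: "0 \<le> A" "A \<le> pnorm p (real (n - 1)) 2" and B: "0 \<le> B" "B \<le> pnorm p (real (n - 1)) 1"
    and C: "C \<le> pnorm p 2 2" and cU: "pnorm p 2 2 < U"
    and cubic: "U^2 * (U - C) < 4 * A^2 * U + real (n - 5) * B^2 * (U - C)"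
  shows "rho (sombor_mat p n (B3_adj n)) < rho (sombor_mat p n (B2_adj n))"
  using rho_B3_le[OF n E G H Q R U \<beta> row0 row1] rho_B2_gt[OF n A B C cU cubic] by linarith

lemma rho_B3_lt_rho_B2_of_p_ge_2:
  assumes n: "5 \<le> n" and p: "2 \<le> p"
    and E: "0 \<le> E" "(real n - 2)^2 + 16 \<le> E^2" and G: "0 \<le> G" "(real n - 2)^2 + 4 \<le> G^2"
    and H: "0 \<le> H" "(real n - 2)^2 + 1 \<le> H^2" and Q: "0 \<le> Q" "20 \<le> Q^2"
    and R: "0 \<le> R" "17 \<le> R^2" and U: "3 < U" and \<beta>: "0 < \<beta>"
    and row0: "E * \<beta> * U + 2 * G * (G + Q * \<beta>) + (real n - 5) * H^2 \<le> U^2"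
    and row1: "E * U + 2 * Q * (G + Q * \<beta>) + R^2 * \<beta> \<le> U^2 * \<beta>"
    and cubic: "U^2 * (U - 2) < 4 * (real n - 1)^2 * U + (real n - 5) * (real n - 1)^2 * (U - 2)"
  shows "rho (sombor_mat p n (B3_adj n)) < rho (sombor_mat p n (B2_adj n))"
proof -
  have n_diff: "real (n - 1) = real n - 1" "real (n - 2) = real n - 2" "real (n - 5) = real n - 5"
    using n by auto
  have "pnorm p (real (n - 2)) 4 \<le> E"
    using p E n_diff by (intro pnorm_le_of_sum_squares) auto
  moreover have "pnorm p (real (n - 2)) 2 \<le> G"
    using p G n_diff by (intro pnorm_le_of_sum_squares) auto
  moreover have "pnorm p (real (n - 2)) 1 \<le> H"
    using p H n_diff by (intro pnorm_le_of_sum_squares) auto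
  moreover have "pnorm p 4 2 \<le> Q" "pnorm p 4 1 \<le> R"
    using p Q R by (auto intro: pnorm_le_of_sum_squares)
  moreover have "real n - 1 \<le> pnorm p (real (n - 1)) 2" "real n - 1 \<le> pnorm p (real (n - 1)) 1"
    using n p n_diff by (auto intro: pnorm_ge_left)
  moreover have "2 \<le> pnorm p 2 2" using p by (auto intro: pnorm_ge_left)
  moreover have "pnorm p 2 2 \<le> 3" using p by (intro pnorm_le_of_sum_squares) auto
  ultimately show ?thesis
    using n U \<beta> row0 row1 cubic unfolding n_diff
    by (intro rho_B3_lt_rho_B2[where U = U and \<beta> = \<beta> and E = E and G = G and H = H and Q = Q
          and R = R and A = "real n - 1" and B = "real n - 1" and C = 2]) auto
qed

section \<open>The three ranges of the order\<close>

lemma large_order_row0_bound: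
  fixes K U \<beta> :: real
  assumes K: "11 \<le> K" and U2: "U^2 = K^2 * (K + 2)" and \<beta>U: "\<beta> * U = 3 / 2 * (K + 2)"
    and \<beta>: "\<beta> \<le> 1 / 2"
  shows "(K + 2) * \<beta> * U + 2 * (K + 1/2) * (K + 1/2 + 9/2 * \<beta>) + (K - 3) * (K + 1/8)^2 \<le> U^2"
proof -
  have "(K + 2) * \<beta> * U = 3/2 * (K + 2)^2"
    by (simp only: mult.assoc \<beta>U) (simp add: power2_eq_square)
  then have "(K + 2) * \<beta> * U + 2 * (K + 1/2) * (K + 1/2 + 9/2 * \<beta>) + (K - 3) * (K + 1/8)^2
      = 3/2 * (K + 2)^2 + 2 * (K + 1/2)^2 + 9 * (K + 1/2) * \<beta> + (K - 3) * (K + 1/8)^2"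
    by (simp add: algebra_simps power2_eq_square)
  also have "\<dots> \<le> 3/2 * (K + 2)^2 + 2 * (K + 1/2)^2 + 9 * (K + 1/2) / 2 + (K - 3) * (K + 1/8)^2"
    using \<beta> K by simp
  also have "\<dots> = K^2 * (K + 2) - (5/4 * (K * K) - 753/64 * K - 557/64)"
    by (simp add: field_simps power2_eq_square)
  also have "\<dots> \<le> U^2"
  proof -
    have "11 * K \<le> K * K" using K by (intro mult_right_mono) auto
    then have "0 \<le> 5/4 * (K * K) - 753/64 * K - 557/64" using K by linarith
    then show ?thesis using U2 by simp
  qed
  finally show ?thesis .
qed

lemma large_order_row1_bound:
  fixes K U \<beta> :: real
  assumes K: "11 \<le> K" and U: "3 * (K + 2) \<le> U" and \<beta>U: "\<beta> * U = 3 / 2 * (K + 2)"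
    and \<beta>: "\<beta> \<le> 1 / 2"
  shows "(K + 2) * U + 2 * (9/2) * (K + 1/2 + 9/2 * \<beta>) + (9/2)^2 * \<beta> \<le> U^2 * \<beta>"
proof -
  define V where "V = (K + 2) * U"
  have "(K + 2) * (3 * (K + 2)) \<le> V" unfolding V_def using U K by (intro mult_left_mono) auto
  moreover have "(K + 2) * (3 * (K + 2)) = 3 * (K * K) + 12 * K + 12" by (simp add: algebra_simps)
  moreover have "11 * K \<le> K * K" using K by (intro mult_right_mono) auto
  ultimately have "V + 9 * K + 9/2 + 243/4 * \<beta> \<le> 3/2 * V" using \<beta> K by linarith
  moreover have "U^2 * \<beta> = 3/2 * V"
  proof -
    have "U^2 * \<beta> = U * (\<beta> * U)" by (simp add: power2_eq_square)
    then show ?thesis unfolding \<beta>U V_def by simp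
  qed
  ultimately show ?thesis unfolding V_def by (simp add: algebra_simps power2_eq_square)
qed

lemma large_order_cubic_neg:
  fixes K U :: real
  assumes "0 \<le> K" "0 < U" and U2: "U^2 = K^2 * (K + 2)"
  shows "U^2 * (U - 2) < 4 * (K + 1)^2 * U + (K - 3) * (K + 1)^2 * (U - 2)"
proof -
  have "U^2 * (U - 2) - 4 * (K + 1)^2 * U - (K - 3) * (K + 1)^2 * (U - 2)
      = - ((K^2 + 3 * K + 1) * U + 2 * (3 * K^2 + 5 * K + 3))"
    unfolding U2 by (simp add: algebra_simps power2_eq_square)
  moreover have "0 < K^2 + 3 * K + 1" "0 < 3 * K^2 + 5 * K + 3"
    using assms zero_le_power2[of K] by linarith+
  ultimately show ?thesis using \<open>0 < U\<close> by (smt (verit) mult_pos_pos)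
qed

lemma rho_B3_lt_rho_B2_large_order:
  assumes n: "13 \<le> n" and p: "2 \<le> p"
  shows "rho (sombor_mat p n (B3_adj n)) < rho (sombor_mat p n (B2_adj n))"
proof -
  define K where "K = real n - 2"
  define U where "U = K * sqrt (K + 2)"
  define \<beta> where "\<beta> = 3 * (K + 2) / (2 * U)"
  have K: "11 \<le> K" using n unfolding K_def by simp
  have U2: "U^2 = K^2 * (K + 2)" unfolding U_def using K by (simp add: power_mult_distrib)
  have "11 * K \<le> K * K" using K by (intro mult_right_mono) auto
  then have "9 * K + 18 \<le> K * K" using K by linarith
  then have "(9 * K + 18) * (K + 2) \<le> (K * K) * (K + 2)" using K by (intro mult_right_mono) auto
  then have "(3 * (K + 2))^2 \<le> U^2" unfolding U2 by (simp add: power2_eq_square algebra_simps)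
  moreover have "0 \<le> U" unfolding U_def using K by simp
  ultimately have U: "3 * (K + 2) \<le> U" by (rule power2_le_imp_le)
  have \<beta>U: "\<beta> * U = 3 / 2 * (K + 2)" unfolding \<beta>_def using U K by simp
  have K0: "0 \<le> K" using K by simp
  have n_K: "real n - 2 = K" "real n - 5 = K - 3" "real n - 1 = K + 1" unfolding K_def by simp_all
  have U0: "0 < U" using U K by (simp add: algebra_simps)
  have \<beta>: "0 < \<beta>" "\<beta> \<le> 1 / 2" unfolding \<beta>_def using U U0 K by (simp_all add: field_simps)
  show ?thesis
  proof (rule rho_B3_lt_rho_B2_of_p_ge_2[OF _ p, where E = "K + 2" and G = "K + 1/2"
        and H = "K + 1/8" and Q = "9/2" and R = "9/2" and U = U and \<beta> = \<beta>])
    show "(real n - 2)^2 + 16 \<le> (K + 2)^2" "(real n - 2)^2 + 4 \<le> (K + 1/2)^2"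
      "(real n - 2)^2 + 1 \<le> (K + 1/8)^2"
      unfolding n_K using K by (simp_all add: power2_eq_square algebra_simps)
  qed (use n K U \<beta> large_order_row0_bound[OF K U2 \<beta>U \<beta>(2)]
      large_order_row1_bound[OF K U \<beta>U \<beta>(2)] large_order_cubic_neg[OF K0 U0 U2]
      in \<open>simp_all add: n_K power2_eq_square\<close>)
qed

text \<open>For \<open>n = 6\<close> the graph \<open>B\<^sub>3\<close> is symmetric under \<open>0 \<leftrightarrow> 1\<close>, \<open>4 \<leftrightarrow> 5\<close>, hence \<open>\<beta> = 1\<close>.\<close>

lemma rho_B3_lt_rho_B2_order_6_of_bounds:
  assumes p: "2 \<le> p"
    and E: "pnorm p 4 4 \<le> E" and G: "pnorm p 4 2 \<le> G" and H: "pnorm p 4 1 \<le> H"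
    and A: "0 \<le> A" "A \<le> pnorm p 5 2" and B: "0 \<le> B" "B \<le> pnorm p 5 1" and C: "C \<le> pnorm p 2 2"
    and U: "3 < U" and rows: "E * U + 4 * G^2 + H^2 \<le> U^2"
    and cubic: "U^2 * (U - C) < 4 * A^2 * U + B^2 * (U - C)"
  shows "rho (sombor_mat p 6 (B3_adj 6)) < rho (sombor_mat p 6 (B2_adj 6))"
proof (rule rho_B3_lt_rho_B2[where \<beta> = 1 and U = U and E = E and G = G and H = H and Q = G and R = H
      and A = A and B = B and C = C])
  have "pnorm p 2 2 \<le> 3" using p by (intro pnorm_le_of_sum_squares) auto
  then show "pnorm p 2 2 < U" using U by linarith
qed (use assms in \<open>simp_all add: power2_eq_square\<close>)

lemma rho_B3_lt_rho_B2_order_6_p_upto_41_20: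
  assumes "2 \<le> p" "p \<le> 41 / 20"
  shows "rho (sombor_mat p 6 (B3_adj 6)) < rho (sombor_mat p 6 (B2_adj 6))"
proof (rule rho_B3_lt_rho_B2_order_6_of_bounds[where U = "3269 / 250"])
  show "pnorm p 4 4 \<le> 282843 / 50000" "pnorm p 4 2 \<le> 223607 / 50000" "pnorm p 4 1 \<le> 412311 / 100000"
    using assms(1) by (intro pnorm_le_of_sum_squares; simp add: power2_eq_square)+
  show "535919 / 100000 \<le> pnorm p 5 2"
    by (rule pnorm_ge_by_certificate[where m = 41 and d = 20 and T = "15283 / 100000"])
      (use assms in \<open>simp_all add: power_divide\<close>)
  show "127229 / 25000 \<le> pnorm p 5 1"
    by (rule pnorm_ge_by_certificate[where m = 41 and d = 20 and T = "369 / 10000"])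
      (use assms in \<open>simp_all add: power_divide\<close>)
  show "280461 / 100000 \<le> pnorm p 2 2"
    by (rule pnorm_ge_by_certificate[where m = 41 and d = 20 and T = 1])
      (use assms in \<open>simp_all add: power_divide\<close>)
qed (use assms in \<open>simp_all add: power2_eq_square\<close>)

lemma rho_B3_lt_rho_B2_order_6_p_from_41_20_upto_43_20:
  assumes "41 / 20 \<le> p" "p \<le> 43 / 20"
  shows "rho (sombor_mat p 6 (B3_adj 6)) < rho (sombor_mat p 6 (B2_adj 6))"
proof (rule rho_B3_lt_rho_B2_order_6_of_bounds[where U = "6497 / 500"])
  show "pnorm p 4 4 \<le> 140231 / 25000"
    by (rule pnorm_le_by_certificate[where m = 41 and d = 20 and T = 1])
      (use assms in \<open>simp_all add: power_divide\<close>)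
  show "pnorm p 4 2 \<le> 88903 / 20000"
    by (rule pnorm_le_by_certificate[where m = 41 and d = 20 and T = "24149 / 100000"])
      (use assms in \<open>simp_all add: power_divide\<close>)
  show "pnorm p 4 1 \<le> 82243 / 20000"
    by (rule pnorm_le_by_certificate[where m = 41 and d = 20 and T = "729 / 12500"])
      (use assms in \<open>simp_all add: power_divide\<close>)
  show "5313 / 1000 \<le> pnorm p 5 2"
    by (rule pnorm_ge_by_certificate[where m = 43 and d = 20 and T = "2789 / 20000"])
      (use assms in \<open>simp_all add: power_divide\<close>)
  show "253623 / 50000 \<le> pnorm p 5 1"
    by (rule pnorm_ge_by_certificate[where m = 43 and d = 20 and T = "1571 / 50000"])
      (use assms in \<open>simp_all add: power_divide\<close>)
  show "55217 / 20000 \<le> pnorm p 2 2"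
    by (rule pnorm_ge_by_certificate[where m = 43 and d = 20 and T = 1])
      (use assms in \<open>simp_all add: power_divide\<close>)
qed (use assms in \<open>simp_all add: power2_eq_square\<close>)

lemma rho_B3_lt_rho_B2_order_6_p_from_43_20_upto_23_10:
  assumes "43 / 20 \<le> p" "p \<le> 23 / 10"
  shows "rho (sombor_mat p 6 (B3_adj 6)) < rho (sombor_mat p 6 (B2_adj 6))"
proof (rule rho_B3_lt_rho_B2_order_6_of_bounds[where U = "6423 / 500"])
  show "pnorm p 4 4 \<le> 138043 / 25000"
    by (rule pnorm_le_by_certificate[where m = 43 and d = 20 and T = 1])
      (use assms in \<open>simp_all add: power_divide\<close>)
  show "pnorm p 4 2 \<le> 8793 / 2000"
    by (rule pnorm_le_by_certificate[where m = 43 and d = 20 and T = "5633 / 25000"])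
      (use assms in \<open>simp_all add: power_divide\<close>)
  show "pnorm p 4 1 \<le> 409321 / 100000"
    by (rule pnorm_le_by_certificate[where m = 43 and d = 20 and T = "5077 / 100000"])
      (use assms in \<open>simp_all add: power_divide\<close>)
  show "525567 / 100000 \<le> pnorm p 5 2"
    by (rule pnorm_ge_by_certificate[where m = 23 and d = 10 and T = "6077 / 50000"])
      (use assms in \<open>simp_all add: power_divide\<close>)
  show "31583 / 6250 \<le> pnorm p 5 1"
    by (rule pnorm_ge_by_certificate[where m = 23 and d = 10 and T = "617 / 25000"])
      (use assms in \<open>simp_all add: power_divide\<close>)
  show "270341 / 100000 \<le> pnorm p 2 2"
    by (rule pnorm_ge_by_certificate[where m = 23 and d = 10 and T = 1])
      (use assms in \<open>simp_all add: power_divide\<close>)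
qed (use assms in \<open>simp_all add: power2_eq_square\<close>)

lemma rho_B3_lt_rho_B2_order_6_p_from_23_10_upto_51_20:
  assumes "23 / 10 \<le> p" "p \<le> 51 / 20"
  shows "rho (sombor_mat p 6 (B3_adj 6)) < rho (sombor_mat p 6 (B2_adj 6))"
proof (rule rho_B3_lt_rho_B2_order_6_of_bounds[where U = "1582 / 125"])
  show "pnorm p 4 4 \<le> 540683 / 100000"
    by (rule pnorm_le_by_certificate[where m = 23 and d = 10 and T = 1])
      (use assms in \<open>simp_all add: power_divide\<close>)
  show "pnorm p 4 2 \<le> 433481 / 100000"
    by (rule pnorm_le_by_certificate[where m = 23 and d = 10 and T = "20307 / 100000"])
      (use assms in \<open>simp_all add: power_divide\<close>)
  show "pnorm p 4 1 \<le> 407091 / 100000"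
    by (rule pnorm_le_by_certificate[where m = 23 and d = 10 and T = "1031 / 25000"])
      (use assms in \<open>simp_all add: power_divide\<close>)
  show "518423 / 100000 \<le> pnorm p 5 2"
    by (rule pnorm_ge_by_certificate[where m = 51 and d = 20 and T = "4833 / 50000"])
      (use assms in \<open>simp_all add: power_divide\<close>)
  show "503219 / 100000 \<le> pnorm p 5 1"
    by (rule pnorm_ge_by_certificate[where m = 51 and d = 20 and T = "33 / 2000"])
      (use assms in \<open>simp_all add: power_divide\<close>)
  show "26247 / 10000 \<le> pnorm p 2 2"
    by (rule pnorm_ge_by_certificate[where m = 51 and d = 20 and T = 1])
      (use assms in \<open>simp_all add: power_divide\<close>)
qed (use assms in \<open>simp_all add: power2_eq_square\<close>)

lemma rho_B3_lt_rho_B2_order_6_p_from_51_20_upto_16_5: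
  assumes "51 / 20 \<le> p" "p \<le> 16 / 5"
  shows "rho (sombor_mat p 6 (B3_adj 6)) < rho (sombor_mat p 6 (B2_adj 6))"
proof (rule rho_B3_lt_rho_B2_order_6_of_bounds[where U = "12407 / 1000"])
  show "pnorm p 4 4 \<le> 262471 / 50000"
    by (rule pnorm_le_by_certificate[where m = 51 and d = 20 and T = 1])
      (use assms in \<open>simp_all add: power_divide\<close>)
  show "pnorm p 4 2 \<le> 425511 / 100000"
    by (rule pnorm_le_by_certificate[where m = 51 and d = 20 and T = "4269 / 25000"])
      (use assms in \<open>simp_all add: power_divide\<close>)
  show "pnorm p 4 1 \<le> 80907 / 20000"
    by (rule pnorm_le_by_certificate[where m = 51 and d = 20 and T = "729 / 25000"])
      (use assms in \<open>simp_all add: power_divide\<close>)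
  show "31761 / 6250 \<le> pnorm p 5 2"
    by (rule pnorm_ge_by_certificate[where m = 16 and d = 5 and T = "333 / 6250"])
      (use assms in \<open>simp_all add: power_divide\<close>)
  show "250451 / 50000 \<le> pnorm p 5 1"
    by (rule pnorm_ge_by_certificate[where m = 16 and d = 5 and T = "579 / 100000"])
      (use assms in \<open>simp_all add: power_divide\<close>)
  show "248371 / 100000 \<le> pnorm p 2 2"
    by (rule pnorm_ge_by_certificate[where m = 16 and d = 5 and T = 1])
      (use assms in \<open>simp_all add: power_divide\<close>)
qed (use assms in \<open>simp_all add: power2_eq_square\<close>)

lemma rho_B3_lt_rho_B2_order_6_p_from_16_5:
  assumes "16 / 5 \<le> p"
  shows "rho (sombor_mat p 6 (B3_adj 6)) < rho (sombor_mat p 6 (B2_adj 6))"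
proof (rule rho_B3_lt_rho_B2_order_6_of_bounds[where U = 12 and A = 5 and B = 5 and C = 2])
  show "pnorm p 4 4 \<le> 62093 / 12500"
    by (rule pnorm_le_by_certificate[where m = 16 and d = 5 and T = 1])
      (use assms in \<open>simp_all add: power_divide\<close>)
  show "pnorm p 4 2 \<le> 413123 / 100000"
    by (rule pnorm_le_by_certificate[where m = 16 and d = 5 and T = "5441 / 50000"])
      (use assms in \<open>simp_all add: power_divide\<close>)
  show "pnorm p 4 1 \<le> 100369 / 25000"
    by (rule pnorm_le_by_certificate[where m = 16 and d = 5 and T = "237 / 20000"])
      (use assms in \<open>simp_all add: power_divide\<close>)
qed (use assms in \<open>auto simp: power2_eq_square intro: pnorm_ge_left\<close>)

lemma rho_B3_lt_rho_B2_order_6: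
  assumes "2 \<le> p"
  shows "rho (sombor_mat p 6 (B3_adj 6)) < rho (sombor_mat p 6 (B2_adj 6))"
proof -
  consider "p \<le> 41 / 20" | "41 / 20 \<le> p" "p \<le> 43 / 20" | "43 / 20 \<le> p" "p \<le> 23 / 10"
    | "23 / 10 \<le> p" "p \<le> 51 / 20" | "51 / 20 \<le> p" "p \<le> 16 / 5" | "16 / 5 \<le> p"
    by linarith
  then show ?thesis
    using assms rho_B3_lt_rho_B2_order_6_p_upto_41_20
      rho_B3_lt_rho_B2_order_6_p_from_41_20_upto_43_20
      rho_B3_lt_rho_B2_order_6_p_from_43_20_upto_23_10
      rho_B3_lt_rho_B2_order_6_p_from_23_10_upto_51_20
      rho_B3_lt_rho_B2_order_6_p_from_51_20_upto_16_5
      rho_B3_lt_rho_B2_order_6_p_from_16_5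
    by cases blast+
qed

lemma rho_B3_lt_rho_B2_order_7_to_12:
  assumes "7 \<le> n" "n \<le> 12" and p: "2 \<le> p"
  shows "rho (sombor_mat p n (B3_adj n)) < rho (sombor_mat p n (B2_adj n))"
proof -
  txt \<open>The entry bounds round up the Euclidean entries; \<open>U\<close> is slightly above the Perron root of
    the matrix of these bounds, and \<open>\<beta>\<close> is the ratio of its Perron vector at vertices 1 and 0.\<close>
  note criterion = rho_B3_lt_rho_B2_of_p_ge_2[OF _ p, where Q = "4473 / 1000" and R = "1031 / 250"]
  consider "n = 7" | "n = 8" | "n = 9" | "n = 10" | "n = 11" | "n = 12" using assms by linarith
  then show ?thesis
  proof cases
    case 1
    show ?thesis unfolding 1 by (rule criterion[where E = "1601 / 250" and G = "2693 / 500"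
      and H = "51 / 10" and U = "1523 / 100" and \<beta> = "833 / 1000"])
      (simp_all add: power2_eq_square)
  next
    case 2
    show ?thesis unfolding 2 by (rule criterion[where E = "1803 / 250" and G = "253 / 40"
      and H = "6083 / 1000" and U = "359 / 20" and \<beta> = "877 / 1250"])
      (simp_all add: power2_eq_square)
  next
    case 3
    show ?thesis unfolding 3 by (rule criterion[where E = "8063 / 1000" and G = "7281 / 1000"
      and H = "884 / 125" and U = "2119 / 100" and \<beta> = "6021 / 10000"])
      (simp_all add: power2_eq_square)
  next
    case 4
    show ?thesis unfolding 4 by (rule criterion[where E = "1789 / 200" and G = "8247 / 1000"
      and H = "8063 / 1000" and U = "1243 / 50" and \<beta> = "66 / 125"])
      (simp_all add: power2_eq_square)
  next
    case 5
    show ?thesis unfolding 5 by (rule criterion[where E = "9849 / 1000" and G = "461 / 50"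
      and H = "1132 / 125" and U = "723 / 25" and \<beta> = "2357 / 5000"])
      (simp_all add: power2_eq_square)
  next
    case 6
    show ?thesis unfolding 6 by (rule criterion[where E = "10771 / 1000" and G = "10199 / 1000"
      and H = "201 / 20" and U = "3329 / 100" and \<beta> = "4279 / 10000"])
      (simp_all add: power2_eq_square)
  qed
qed

theorem lemma5p2:
  fixes n :: nat and p :: real
  assumes "n \<ge> 6" and "p \<ge> 2"
  shows "rho (sombor_mat p n (B3_adj n)) < rho (sombor_mat p n (B2_adj n))"
proof -
  consider "n = 6" | "7 \<le> n" "n \<le> 12" | "13 \<le> n" using assms(1) by linarith
  then show ?thesis
  proof cases
    case 1
    then show ?thesis using rho_B3_lt_rho_B2_order_6[OF assms(2)] by simp
  next
    case 2
    then show ?thesis by (rule rho_B3_lt_rho_B2_order_7_to_12[OF _ _ assms(2)])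
  next
    case 3
    then show ?thesis by (rule rho_B3_lt_rho_B2_large_order[OF _ assms(2)])
  qed
qed

end
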